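(* Let $t \ge 0$ and consider the three-taxon multispecies coalescent described in the context, with species tree $S$ of topology $AB|C$ and internal branch length $t$. Let $G_1,\dots,G_L$ be the gene trees (topologies and exact coalescence times) of $L$ independent loci. Let $\mathbb{P}_L$ denote the probability that the GLASS/Maximum-Tree method (equivalently, maximum likelihood under the multispecies coalescent) applied to $G_1,\dots,G_L$ fails to output the topology $AB|C$. Then the limit $\alpha_{\mathrm{ML}}(t) = -\lim_{L\to\infty}\frac{1}{L}\ln \mathbb{P}_L$ exists and $$\alpha_{\mathrm{ML}}(t) = t.$$
   Context: Multispecies coalescent, three-taxon case: $S$ is an ultrametric rooted species tree on three species $A,B,C$ with topology $AB|C$, all (haploid) populations of equal size $N$, time measured in units of $N$ generations backwards from the present. Populations are $A,B,C$ (extant), $AB$ (ancestor of $A$ and $B$, from divergence time $\tau_{AB}$ to $\tau_{ABC}$) and $ABC$ (root population, from $\tau_{ABC}$ to $\infty$), with $\tau_{AB}\le\tau_{ABC}$; the internal branch length is $t=\tau_{ABC}-\tau_{AB}$. For each locus one lineage is sampled from each of $A,B,C$ at time $0$; going backwards in time, within each population every pair of lineages present in that population coalesces independently at rate $1$, and lineages entering an ancestral population merge into it. Loci are independent (unlinked). In particular the lineages from $A$ and $B$ fail to coalesce in population $AB$ with probability $e^{-t}$, in which case the three gene-tree topologies are equally likely. Gene trees are assumed known exactly, including coalescence times. GLASS/Maximum Tree: for each pair of species $X,Y$, compute the minimum over loci of the coalescence time of the lineages from $X$ and $Y$ in $G_\ell$; the output topology groups together the pair with the smallest such minimum. Under this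 model this method coincides with maximum likelihood estimation of the species tree from the gene trees. *)

theory Defs
  imports "HOL-Probability.Probability"
begin

definition exp_M :: "real \<Rightarrow> real measure" where
  "exp_M r = density lborel (exponential_density r)"

definition unif01 :: "real measure" where
  "unif01 = uniform_measure lborel {0..1}"

text \<open>Underlying randomness of one locus:
  x ~ Exp(1): waiting time of the A,B lineages in population AB;
  y ~ Exp(1): waiting time of the (AB) and C lineages in ABC (if A,B coalesced in AB);
  w ~ Exp(3): waiting time of the first coalescence among three lineages in ABC;
  v ~ Exp(1): subsequent waiting time for the last coalescence;
  u ~ U[0,1]: chooses uniformly which of the three pairs coalesces first.\<close>
definition locus_space :: "(real \<times> real \<times> real \<times> real \<times> real) measure" where
  "locus_space = exp_M 1 \<Otimes>\<^sub>M (exp_M 1 \<Otimes>\<^sub>M (exp_M 3 \<Otimes>\<^sub>M (exp_M 1 \<Otimes>\<^sub>M unif01)))"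

text \<open>A gene tree is encoded by the pairwise coalescence times (T_AB, T_AC, T_BC)
  (times measured from the present); its topology is determined by these
  (the cherry is the pair with the smallest coalescence time).
  tAB is the divergence time of A and B, t the internal branch length.\<close>
definition gene_tree ::
  "real \<Rightarrow> real \<Rightarrow> real \<times> real \<times> real \<times> real \<times> real \<Rightarrow> real \<times> real \<times> real" where
  "gene_tree tAB t \<omega> = (case \<omega> of (x, y, w, v, u) \<Rightarrow>
     if x < t then (tAB + x, tAB + t + y, tAB + t + y)
     else (let r = tAB + t + w in
           if u < 1/3 then (r, r + v, r + v)
           else if u < 2/3 then (r + v, r, r + v)
           else (r + v, r + v, r)))"

definition locus_measure :: "real \<Rightarrow> real \<Rightarrow> (real \<times> real \<times> real) measure" where
  "locus_measure tAB t = distr locus_space borel (gene_tree tAB t)"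

definition loci_measure :: "real \<Rightarrow> real \<Rightarrow> nat \<Rightarrow> (nat \<Rightarrow> real \<times> real \<times> real) measure" where
  "loci_measure tAB t L = PiM {..<L} (\<lambda>_. locus_measure tAB t)"

text \<open>GLASS / Maximum Tree fails to output AB|C: the minimum over loci of the
  AB coalescence time is not strictly smaller than both other minima.\<close>
definition glass_fails :: "nat \<Rightarrow> (nat \<Rightarrow> real \<times> real \<times> real) \<Rightarrow> bool" where
  "glass_fails L g \<longleftrightarrow>
     (let mAB = Min ((\<lambda>l. fst (g l)) ` {..<L});
          mAC = Min ((\<lambda>l. fst (snd (g l))) ` {..<L});
          mBC = Min ((\<lambda>l. snd (snd (g l))) ` {..<L})
      in \<not> (mAB < mAC \<and> mAB < mBC))"

definition fail_prob :: "real \<Rightarrow> real \<Rightarrow> nat \<Rightarrow> real" where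
  "fail_prob tAB t L =
     measure (loci_measure tAB t L) {g \<in> space (loci_measure tAB t L). glass_fails L g}"

end

theory Submission
  imports Defs
begin

text \<open>
  The outgroup lineage C almost surely coalesces with A or B only above the root divergence
  \<open>\<tau>\<^sub>A\<^sub>B\<^sub>C = tAB + t\<close>. Hence GLASS can fail only if at no locus do A and B coalesce
  inside the internal branch, an event of probability \<open>e\<^sup>-\<^sup>t\<close> per locus, so
  \<open>\<P>\<^sub>L \<le> e\<^sup>-\<^sup>t\<^sup>L\<close>. Conversely GLASS fails if one locus has the A,C cherry with its
  coalescence within \<open>s\<close> of \<open>\<tau>\<^sub>A\<^sub>B\<^sub>C\<close> while at all other loci A and B coalesce
  above \<open>\<tau>\<^sub>A\<^sub>B\<^sub>C + s\<close>; this has probability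
  \<open>c(s) (e\<^sup>-\<^sup>t\<^sup>-\<^sup>3\<^sup>s)\<^sup>L\<^sup>-\<^sup>1\<close>, and letting \<open>s \<rightarrow> 0\<close> pins the rate to \<open>t\<close>.
\<close>

lemma prob_space_exp_M: "0 < r \<Longrightarrow> prob_space (exp_M r)"
  unfolding exp_M_def by (rule prob_space_exponential_density)

lemma sets_exp_M [measurable_cong]: "sets (exp_M r) = sets borel"
  unfolding exp_M_def by simp

lemma space_exp_M [simp]: "space (exp_M r) = UNIV"
  unfolding exp_M_def by simp

lemma measure_exp_M_UNIV [simp]: "0 < r \<Longrightarrow> measure (exp_M r) UNIV = 1"
  using prob_space.prob_space[OF prob_space_exp_M] by simp

lemma distributed_exp_M: "0 < r \<Longrightarrow> distributed (exp_M r) lborel (\<lambda>x. x) (exponential_density r)"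
  unfolding distributed_def exp_M_def
  by (auto simp: exponential_density_nonneg intro!: distr_id2)

lemma measure_exp_M_greaterThan:
  assumes "0 < r" "0 \<le> a"
  shows "measure (exp_M r) {a<..} = exp (- a * r)"
proof -
  interpret prob_space "exp_M r" using prob_space_exp_M assms(1) .
  have "{x \<in> space (exp_M r). a < x} = {a<..}" by auto
  then show ?thesis
    using exponential_distributedD_gt[OF distributed_exp_M assms(2,1)] assms(1) by simp
qed

lemma measure_exp_M_atMost:
  assumes "0 < r" "0 \<le> a"
  shows "measure (exp_M r) {..a} = 1 - exp (- a * r)"
proof -
  interpret prob_space "exp_M r" using prob_space_exp_M assms(1) .
  have "{x \<in> space (exp_M r). x \<le> a} = {..a}" by auto
  then show ?thesis
    using exponential_distributedD_le[OF distributed_exp_M assms(2,1)] assms(1) by simp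
qed

lemma null_sets_exp_M_singleton: "{a} \<in> null_sets (exp_M r)"
proof -
  have "AE x in lborel. x \<in> {a} \<longrightarrow> ennreal (exponential_density r x) = 0"
    using AE_lborel_singleton[of a] by eventually_elim simp
  then show ?thesis
    unfolding exp_M_def by (subst null_sets_density_iff) simp_all
qed

lemma measure_exp_M_atLeast:
  assumes "0 < r" "0 \<le> a"
  shows "measure (exp_M r) {a..} = exp (- a * r)"
proof -
  have "{a..} = {a<..} \<union> {a}" by auto
  then show ?thesis
    using measure_Un_null_set[OF _ null_sets_exp_M_singleton] measure_exp_M_greaterThan[OF assms]
    by (simp add: sets_exp_M)
qed

lemma sets_unif01 [measurable_cong]: "sets unif01 = sets borel"
  unfolding unif01_def by simp

lemma prob_space_unif01: "prob_space unif01"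
  unfolding unif01_def by (rule prob_space_uniform_measure) auto

lemma measure_unif01_UNIV [simp]: "measure unif01 UNIV = 1"
  using prob_space.prob_space[OF prob_space_unif01] by (simp add: unif01_def)

lemma measure_unif01_middle_third: "measure unif01 {1/3..<2/3} = 1/3"
proof -
  have "{0..1} \<inter> {1/3..<2/3} = {1/3..<2/3::real}" by auto
  then show ?thesis
    unfolding unif01_def measure_def by (simp add: divide_ennreal_def)
qed

lemma measure_pair_measure_Times:
  assumes "sigma_finite_measure N" "A \<in> sets M" "B \<in> sets N"
  shows "measure (M \<Otimes>\<^sub>M N) (A \<times> B) = measure M A * measure N B"
  using sigma_finite_measure.emeasure_pair_measure_Times[OF assms]
  by (simp add: measure_def enn2real_mult)

lemma borel_measurable_fst [measurable]:
  "fst \<in> borel_measurable (borel :: ('a::second_countable_topology \<times> 'b::second_countable_topology) measure)"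
  by (intro borel_measurable_continuous_onI continuous_intros)

lemma borel_measurable_snd [measurable]:
  "snd \<in> borel_measurable (borel :: ('a::second_countable_topology \<times> 'b::second_countable_topology) measure)"
  by (intro borel_measurable_continuous_onI continuous_intros)

lemma prob_space_locus_space: "prob_space locus_space"
  unfolding locus_space_def
  by (intro prob_space_pair prob_space_exp_M prob_space_unif01) auto

lemma space_locus_space [simp]: "space locus_space = UNIV"
  unfolding locus_space_def by (simp add: space_pair_measure unif01_def)

lemma measure_locus_space_Times:
  assumes [measurable]: "A \<in> sets borel" "B \<in> sets borel" "C \<in> sets borel" "D \<in> sets borel" "E \<in> sets borel"
  shows "measure locus_space (A \<times> B \<times> C \<times> D \<times> E) =
    measure (exp_M 1) A * measure (exp_M 1) B * measure (exp_M 3) C * measure (exp_M 1) D * measure unif01 E"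
proof -
  have \<sigma>: "sigma_finite_measure (exp_M r \<Otimes>\<^sub>M N)" if "0 < r" "prob_space N" for r N
    using that by (intro prob_space_imp_sigma_finite prob_space_pair prob_space_exp_M)
  show ?thesis
    unfolding locus_space_def
    by (simp add: measure_pair_measure_Times \<sigma> prob_space_exp_M prob_space_pair prob_space_unif01
        prob_space_imp_sigma_finite mult.assoc)
qed

lemma gene_tree_measurable [measurable]: "gene_tree tAB t \<in> borel_measurable locus_space"
  unfolding gene_tree_def Let_def locus_space_def by measurable

lemma prob_space_locus_measure: "prob_space (locus_measure tAB t)"
  unfolding locus_measure_def
  by (intro prob_space.prob_space_distr prob_space_locus_space gene_tree_measurable)

lemma sets_locus_measure [measurable_cong]: "sets (locus_measure tAB t) = sets borel"
  unfolding locus_measure_def by simp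

lemma measure_locus_measure:
  "S \<in> sets borel \<Longrightarrow> measure (locus_measure tAB t) S = measure locus_space (gene_tree tAB t -` S)"
  unfolding locus_measure_def by (subst measure_distr) auto

lemma locus_measure_ge_Times:
  assumes "A \<times> B \<times> C \<times> D \<times> E \<subseteq> gene_tree tAB t -` S"
    and [measurable]: "S \<in> sets borel"
      "A \<in> sets borel" "B \<in> sets borel" "C \<in> sets borel" "D \<in> sets borel" "E \<in> sets borel"
  shows "measure (exp_M 1) A * measure (exp_M 1) B * measure (exp_M 3) C * measure (exp_M 1) D * measure unif01 E
    \<le> measure (locus_measure tAB t) S"
proof -
  interpret prob_space locus_space by (rule prob_space_locus_space)
  have "gene_tree tAB t -` S \<in> sets locus_space"
    using measurable_sets[OF gene_tree_measurable assms(2)] by simp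
  then show ?thesis
    using assms(1) by (simp add: measure_locus_measure flip: measure_locus_space_Times) (rule finite_measure_mono)
qed

lemma locus_measure_le_Times:
  assumes "gene_tree tAB t -` S \<subseteq> A \<times> B \<times> C \<times> D \<times> E"
    and [measurable]: "S \<in> sets borel"
      "A \<in> sets borel" "B \<in> sets borel" "C \<in> sets borel" "D \<in> sets borel" "E \<in> sets borel"
  shows "measure (locus_measure tAB t) S \<le>
    measure (exp_M 1) A * measure (exp_M 1) B * measure (exp_M 3) C * measure (exp_M 1) D * measure unif01 E"
proof -
  interpret prob_space locus_space by (rule prob_space_locus_space)
  have "A \<times> B \<times> C \<times> D \<times> E \<in> sets locus_space"
    unfolding locus_space_def by measurable
  then show ?thesis
    using assms(1) by (simp add: measure_locus_measure flip: measure_locus_space_Times) (rule finite_measure_mono)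
qed

lemma locus_measure_AB_late_le:
  assumes "0 \<le> t"
  shows "measure (locus_measure tAB t) {p. tAB + t \<le> fst p} \<le> exp (- t)"
proof -
  have "gene_tree tAB t -` {p. tAB + t \<le> fst p} \<subseteq> {t..} \<times> UNIV \<times> UNIV \<times> UNIV \<times> UNIV"
    by (force simp: gene_tree_def Let_def split: if_splits)
  then have "measure (locus_measure tAB t) {p. tAB + t \<le> fst p} \<le>
    measure (exp_M 1) {t..} * measure (exp_M 1) UNIV * measure (exp_M 3) UNIV * measure (exp_M 1) UNIV * measure unif01 UNIV"
    by (rule locus_measure_le_Times) measurable
  then show ?thesis
    using assms by (simp add: measure_exp_M_atLeast)
qed

lemma locus_measure_outgroup_early_eq_0:
  "measure (locus_measure tAB t) {p. fst (snd p) < tAB + t \<or> snd (snd p) < tAB + t} = 0"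
proof -
  interpret prob_space locus_space by (rule prob_space_locus_space)
  let ?S = "{p. fst (snd p) < tAB + t \<or> snd (snd p) < tAB + t} :: (real \<times> real \<times> real) set"
  let ?R = "UNIV \<times> {0..} \<times> {0..} \<times> {0..} \<times> UNIV :: (real \<times> real \<times> real \<times> real \<times> real) set"
  have R: "?R \<in> sets locus_space"
    unfolding locus_space_def by measurable
  have "measure locus_space ?R = 1"
    by (simp add: measure_locus_space_Times measure_exp_M_atLeast)
  then have "measure locus_space (- ?R) = 0"
    using prob_compl[OF R] by (simp add: Compl_eq_Diff_UNIV)
  moreover have "gene_tree tAB t -` ?S \<subseteq> - ?R"
    by (force simp: gene_tree_def Let_def split: if_splits)
  ultimately have "measure locus_space (gene_tree tAB t -` ?S) \<le> 0"
    using finite_measure_mono[of _ "- ?R"] sets.compl_sets[OF R] by (simp add: Compl_eq_Diff_UNIV)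
  moreover have "?S \<in> sets borel"
    by measurable
  ultimately show ?thesis
    by (simp add: measure_locus_measure measure_le_0_iff)
qed

lemma locus_measure_AC_cherry_ge:
  assumes "0 \<le> t" "0 \<le> s"
  shows "exp (- t) * (1 - exp (- 3 * s)) / 3 \<le>
    measure (locus_measure tAB t) {p. fst (snd p) \<le> tAB + t + s \<and> fst (snd p) \<le> fst p}"
proof -
  have "{t<..} \<times> UNIV \<times> {..s} \<times> {0..} \<times> {1/3..<2/3}
      \<subseteq> gene_tree tAB t -` {p. fst (snd p) \<le> tAB + t + s \<and> fst (snd p) \<le> fst p}"
    by (force simp: gene_tree_def Let_def)
  then have "measure (exp_M 1) {t<..} * measure (exp_M 1) UNIV * measure (exp_M 3) {..s}
      * measure (exp_M 1) {0..} * measure unif01 {1/3..<2/3}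
    \<le> measure (locus_measure tAB t) {p. fst (snd p) \<le> tAB + t + s \<and> fst (snd p) \<le> fst p}"
    by (rule locus_measure_ge_Times) measurable
  then show ?thesis
    using assms
    by (simp add: measure_exp_M_greaterThan measure_exp_M_atMost measure_exp_M_atLeast
        measure_unif01_middle_third mult.commute[of s])
qed

lemma locus_measure_AB_later_ge:
  assumes "0 \<le> t" "0 \<le> s"
  shows "exp (- t) * exp (- 3 * s) \<le> measure (locus_measure tAB t) {p. tAB + t + s \<le> fst p}"
proof -
  have "{t<..} \<times> UNIV \<times> {s<..} \<times> {0..} \<times> UNIV \<subseteq> gene_tree tAB t -` {p. tAB + t + s \<le> fst p}"
    by (force simp: gene_tree_def Let_def)
  then have "measure (exp_M 1) {t<..} * measure (exp_M 1) UNIV * measure (exp_M 3) {s<..}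
      * measure (exp_M 1) {0..} * measure unif01 UNIV
    \<le> measure (locus_measure tAB t) {p. tAB + t + s \<le> fst p}"
    by (rule locus_measure_ge_Times) measurable
  then show ?thesis
    using assms by (simp add: measure_exp_M_greaterThan measure_exp_M_atLeast mult.commute[of s])
qed

lemma Min_image_less_Min_images_iff:
  fixes f g h :: "'a \<Rightarrow> 'b::linorder"
  assumes "finite I" "I \<noteq> {}"
  shows "Min (f ` I) < Min (g ` I) \<and> Min (f ` I) < Min (h ` I) \<longleftrightarrow> (\<exists>i\<in>I. \<forall>j\<in>I. f i < g j \<and> f i < h j)"
proof -
  have "Min (f ` I) < Min (g ` I) \<and> Min (f ` I) < Min (h ` I) \<longleftrightarrow>
      Min (f ` I) < min (Min (g ` I)) (Min (h ` I))"
    by simp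
  also have "\<dots> \<longleftrightarrow> (\<exists>i\<in>I. f i < min (Min (g ` I)) (Min (h ` I)))"
    using assms by (simp add: Min_less_iff del: min_less_iff_conj)
  also have "\<dots> \<longleftrightarrow> (\<exists>i\<in>I. \<forall>j\<in>I. f i < g j \<and> f i < h j)"
    using assms by (auto simp: Min_gr_iff)
  finally show ?thesis .
qed

lemma glass_fails_iff:
  assumes "0 < L"
  shows "glass_fails L g \<longleftrightarrow> \<not> (\<exists>l<L. \<forall>l'<L. fst (g l) < fst (snd (g l')) \<and> fst (g l) < snd (snd (g l')))"
proof -
  have "{..<L} \<noteq> {}"
    using assms by auto
  from Min_image_less_Min_images_iff[OF finite_lessThan this,
      of "\<lambda>l. fst (g l)" "\<lambda>l. fst (snd (g l))" "\<lambda>l. snd (snd (g l))"]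
  show ?thesis
    unfolding glass_fails_def Let_def by (simp only: lessThan_iff Bex_def Ball_def)
qed

lemma glass_fails_imp_AB_late:
  assumes "0 < L" "glass_fails L g" "l < L"
    and "\<forall>l'<L. T \<le> fst (snd (g l')) \<and> T \<le> snd (snd (g l'))"
  shows "T \<le> fst (g l)"
  using assms by (force simp: glass_fails_iff)

lemma glass_fails_if_AC_cherry:
  assumes "i < L" "fst (snd (g i)) \<le> fst (g i)" "fst (snd (g i)) \<le> T"
    and "\<forall>l<L. l \<noteq> i \<longrightarrow> T \<le> fst (g l)"
  shows "glass_fails L g"
  using assms by (subst glass_fails_iff) (force+)

lemma space_locus_measure [simp]: "space (locus_measure tAB t) = UNIV"
  unfolding locus_measure_def by simp

lemma space_loci_measure [simp]: "space (loci_measure tAB t L) = PiE {..<L} (\<lambda>_. UNIV)"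
  unfolding loci_measure_def by (simp add: space_PiM)

lemma prob_space_loci_measure: "prob_space (loci_measure tAB t L)"
  unfolding loci_measure_def by (intro prob_space_PiM prob_space_locus_measure)

lemma sets_glass_fails:
  assumes "0 < L"
  shows "{g \<in> space (loci_measure tAB t L). glass_fails L g} \<in> sets (loci_measure tAB t L)"
proof -
  have "{g \<in> space (loci_measure tAB t L). glass_fails L g} =
    {g \<in> space (loci_measure tAB t L).
      \<not> (\<exists>l\<in>{..<L}. \<forall>l'\<in>{..<L}. fst (g l) < fst (snd (g l')) \<and> fst (g l) < snd (snd (g l')))}"
    using glass_fails_iff[OF assms] by auto
  also have "\<dots> \<in> sets (loci_measure tAB t L)"
    unfolding loci_measure_def by measurable
  finally show ?thesis .
qed

lemma measure_PiM_PiE_identical: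
  assumes "prob_space M" "finite I" "\<And>i. i \<in> I \<Longrightarrow> B i \<in> sets M"
  shows "measure (PiM I (\<lambda>_. M)) (PiE I B) = (\<Prod>i\<in>I. measure M (B i))"
proof -
  interpret finite_product_prob_space "\<lambda>_. M" I
    unfolding finite_product_prob_space_def finite_product_sigma_finite_def product_sigma_finite_def
      product_prob_space_def finite_product_sigma_finite_axioms_def product_prob_space_axioms_def
    using assms prob_space_imp_sigma_finite by auto
  show ?thesis
    using assms(3) by (rule prob_times)
qed

lemma fail_prob_le_exp:
  assumes "0 < L" "0 \<le> t"
  shows "fail_prob tAB t L \<le> exp (- t) ^ L"
proof -
  let ?M = "loci_measure tAB t L" and ?P = "locus_measure tAB t"
  interpret prob_space ?M by (rule prob_space_loci_measure)
  define Late where "Late = {p::real \<times> real \<times> real. tAB + t \<le> fst p}"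
  define Early where "Early = {p::real \<times> real \<times> real. fst (snd p) < tAB + t \<or> snd (snd p) < tAB + t}"
  have [measurable]: "Late \<in> sets borel" "Early \<in> sets borel"
    unfolding Late_def Early_def by measurable
  let ?G = "PiE {..<L} (\<lambda>_. - Early)"
  have G: "?G \<in> sets ?M" and PiE_Late: "PiE {..<L} (\<lambda>_. Late) \<in> sets ?M"
    unfolding loci_measure_def by (auto intro!: sets_PiM_I_finite simp: sets_locus_measure)
  have "measure ?P (- Early) = 1"
    using prob_space.prob_compl[OF prob_space_locus_measure, of Early] locus_measure_outgroup_early_eq_0
    by (simp add: Early_def Compl_eq_Diff_UNIV sets_locus_measure)
  then have "measure ?M ?G = 1"
    unfolding loci_measure_def
    by (subst measure_PiM_PiE_identical) (auto simp: prob_space_locus_measure sets_locus_measure)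
  then have null: "measure ?M (space ?M - ?G) = 0"
    using prob_compl[OF G] by simp
  have Rest: "space ?M - ?G \<in> sets ?M"
    using G by (rule sets.compl_sets)
  have "{g \<in> space ?M. glass_fails L g} \<subseteq> PiE {..<L} (\<lambda>_. Late) \<union> (space ?M - ?G)"
  proof
    fix g assume "g \<in> {g \<in> space ?M. glass_fails L g}"
    then have g: "g \<in> space ?M" "glass_fails L g"
      by auto
    show "g \<in> PiE {..<L} (\<lambda>_. Late) \<union> (space ?M - ?G)"
    proof (cases "g \<in> ?G")
      case True
      then have "\<forall>l'<L. tAB + t \<le> fst (snd (g l')) \<and> tAB + t \<le> snd (snd (g l'))"
        by (auto simp: Early_def PiE_iff not_less)
      then have "g l \<in> Late" if "l < L" for l
        using glass_fails_imp_AB_late[OF assms(1) g(2) that] by (simp add: Late_def)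
      with g(1) show ?thesis
        by (auto simp: PiE_iff)
    qed (use g(1) in auto)
  qed
  then have "fail_prob tAB t L \<le> measure ?M (PiE {..<L} (\<lambda>_. Late) \<union> (space ?M - ?G))"
    unfolding fail_prob_def using Rest PiE_Late by (intro finite_measure_mono) auto
  also have "\<dots> \<le> measure ?M (PiE {..<L} (\<lambda>_. Late))"
    using measure_Un_le[OF PiE_Late Rest] null by simp
  also have "\<dots> = measure ?P Late ^ L"
    unfolding loci_measure_def
    by (subst measure_PiM_PiE_identical) (auto simp: prob_space_locus_measure sets_locus_measure)
  also have "\<dots> \<le> exp (- t) ^ L"
    using locus_measure_AB_late_le[OF assms(2), of tAB] by (simp add: Late_def power_mono)
  finally show ?thesis .
qed

lemma fail_prob_ge_exp:
  assumes "0 \<le> t" "0 \<le> s"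
  shows "exp (- t) * (1 - exp (- 3 * s)) / 3 * (exp (- t) * exp (- 3 * s)) ^ n \<le> fail_prob tAB t (Suc n)"
proof -
  let ?M = "loci_measure tAB t (Suc n)" and ?P = "locus_measure tAB t"
  define Cherry where "Cherry = {p::real \<times> real \<times> real. fst (snd p) \<le> tAB + t + s \<and> fst (snd p) \<le> fst p}"
  define Later where "Later = {p::real \<times> real \<times> real. tAB + t + s \<le> fst p}"
  have [measurable]: "Cherry \<in> sets borel" "Later \<in> sets borel"
    unfolding Cherry_def Later_def by measurable
  let ?Y = "PiE {..<Suc n} (\<lambda>i. if i = n then Cherry else Later)"
  have "exp (- t) * (1 - exp (- 3 * s)) / 3 * (exp (- t) * exp (- 3 * s)) ^ n \<le> measure ?P Cherry * measure ?P Later ^ n"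
    using locus_measure_AC_cherry_ge[OF assms, of tAB] locus_measure_AB_later_ge[OF assms, of tAB]
    by (intro mult_mono power_mono) (auto simp: Cherry_def Later_def)
  also have "\<dots> = (\<Prod>i<Suc n. measure ?P (if i = n then Cherry else Later))"
    by (simp add: mult.commute)
  also have "\<dots> = measure ?M ?Y"
    unfolding loci_measure_def
    by (subst measure_PiM_PiE_identical) (auto simp: prob_space_locus_measure sets_locus_measure)
  also have "\<dots> \<le> fail_prob tAB t (Suc n)"
  proof -
    interpret prob_space ?M by (rule prob_space_loci_measure)
    have "?Y \<subseteq> {g \<in> space ?M. glass_fails (Suc n) g}"
    proof safe
      fix g assume g: "g \<in> ?Y"
      then show "g \<in> space ?M"
        by (auto simp: PiE_iff)
      have "g n \<in> Cherry" "\<forall>l<Suc n. l \<noteq> n \<longrightarrow> g l \<in> Later"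
        using PiE_mem[OF g] by force+
      then show "glass_fails (Suc n) g"
        by (intro glass_fails_if_AC_cherry[of n _ _ "tAB + t + s"]) (auto simp: Cherry_def Later_def)
    qed
    then show ?thesis
      unfolding fail_prob_def using sets_glass_fails[of "Suc n" tAB t] by (intro finite_measure_mono) auto
  qed
  finally show ?thesis .
qed

lemma tendsto_exponential_rate:
  fixes f :: "nat \<Rightarrow> real"
  assumes "0 \<le> t"
    and upper: "\<And>n. f (Suc n) \<le> exp (- t) ^ Suc n"
    and lower: "\<And>a. 0 < a \<Longrightarrow> \<exists>c>0. \<forall>n. c * exp (- (t + a)) ^ n \<le> f (Suc n)"
  shows "(\<lambda>n. - ln (f n) / real n) \<longlonglongrightarrow> t"
proof -
  have rate_le: "- ln (f (Suc n)) / real (Suc n) \<le> - ln c / real (Suc n) + (t + a)"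
    if "0 < a" "0 < c" "c * exp (- (t + a)) ^ n \<le> f (Suc n)" for n a c
  proof -
    have "ln c - (t + a) * real n = ln (c * exp (- (t + a)) ^ n)"
      using \<open>0 < c\<close> by (simp add: ln_mult ln_realpow algebra_simps)
    also have "\<dots> \<le> ln (f (Suc n))"
      using that by (intro ln_mono) auto
    finally have "- ln (f (Suc n)) \<le> - ln c + (t + a) * real (Suc n)"
      using \<open>0 \<le> t\<close> \<open>0 < a\<close> by (simp add: algebra_simps)
    then have "- ln (f (Suc n)) / real (Suc n) \<le> (- ln c + (t + a) * real (Suc n)) / real (Suc n)"
      by (intro divide_right_mono) auto
    also have "\<dots> = - ln c / real (Suc n) + (t + a)"
      by (simp add: diff_divide_distrib del: of_nat_Suc)
    finally show ?thesis .
  qed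
  have pos: "0 < f (Suc n)" for n
  proof -
    obtain c where "0 < c" "c * exp (- (t + 1)) ^ n \<le> f (Suc n)"
      using lower[of 1] by auto
    then show ?thesis
      by (smt (verit) exp_gt_zero mult_pos_pos zero_less_power)
  qed
  have rate_ge: "t \<le> - ln (f (Suc n)) / real (Suc n)" for n
  proof -
    have "ln (f (Suc n)) \<le> ln (exp (- t) ^ Suc n)"
      using upper[of n] pos[of n] by (intro ln_mono)
    also have "\<dots> = - t * real (Suc n)"
      by (subst ln_realpow) auto
    finally have "t * real (Suc n) \<le> - ln (f (Suc n))"
      by simp
    then show ?thesis
      by (subst pos_le_divide_eq) auto
  qed
  have "(\<lambda>n. - ln (f (Suc n)) / real (Suc n)) \<longlonglongrightarrow> t"
  proof (rule order_tendstoI)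
    fix y assume "y < t"
    then show "\<forall>\<^sub>F n in sequentially. y < - ln (f (Suc n)) / real (Suc n)"
      using rate_ge less_le_trans by (intro always_eventually allI) blast
  next
    fix y assume "t < y"
    define a where "a = (y - t) / 2"
    have "0 < a" "t + a < y"
      using \<open>t < y\<close> by (simp_all add: a_def field_simps)
    then obtain c where c: "0 < c" "\<forall>n. c * exp (- (t + a)) ^ n \<le> f (Suc n)"
      using lower by blast
    have "(\<lambda>n. - ln c / real (Suc n) + (t + a)) \<longlonglongrightarrow> 0 + (t + a)"
      by (intro tendsto_add LIMSEQ_Suc[OF lim_const_over_n] tendsto_const)
    then have "\<forall>\<^sub>F n in sequentially. - ln c / real (Suc n) + (t + a) < y"
      using \<open>t + a < y\<close> by (simp add: order_tendstoD)
    then show "\<forall>\<^sub>F n in sequentially. - ln (f (Suc n)) / real (Suc n) < y"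
      by eventually_elim (use rate_le[OF \<open>0 < a\<close> c(1)] c(2) in \<open>meson le_less_trans\<close>)
  qed
  then show ?thesis
    by (rule LIMSEQ_imp_Suc)
qed

theorem mainTheorem1:
  fixes tAB t :: real
  assumes "tAB \<ge> 0" and "t \<ge> 0"
  shows "((\<lambda>L. - ln (fail_prob tAB t L) / real L) \<longlongrightarrow> t) sequentially"
proof (rule tendsto_exponential_rate[OF assms(2)])
  show "fail_prob tAB t (Suc n) \<le> exp (- t) ^ Suc n" for n
    using fail_prob_le_exp[OF zero_less_Suc assms(2)] .
  fix a :: real assume "0 < a"
  have "exp (- t) * (1 - exp (- a)) / 3 * exp (- (t + a)) ^ n \<le> fail_prob tAB t (Suc n)" for n
    using fail_prob_ge_exp[OF assms(2), of "a / 3" n tAB] \<open>0 < a\<close> by (simp add: mult_exp_exp)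
  moreover have "0 < exp (- t) * (1 - exp (- a)) / 3"
    using \<open>0 < a\<close> by simp
  ultimately show "\<exists>c>0. \<forall>n. c * exp (- (t + a)) ^ n \<le> fail_prob tAB t (Suc n)"
    by blast
qed

end
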